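(* For every $n\ge3$, the Cayley--Dickson loop $Q_n$ is not automorphic, i.e. $Inn(Q_n)\not\le Aut(Q_n)$.
   Context: Cayley--Dickson loops: $Q_0=\{1,-1\}\subset\mathbb{R}$ with conjugation $x^*=x$. For $n\ge1$, $Q_n=\{(x,0),(x,1)\mid x\in Q_{n-1}\}$ with multiplication $(x,0)(y,0)=(xy,0)$, $(x,0)(y,1)=(yx,1)$, $(x,1)(y,0)=(xy^*,1)$, $(x,1)(y,1)=(-y^*x,0)$ and conjugation $(x,0)^*=(x^*,0)$, $(x,1)^*=(-x,1)$, where $-(x,a)=(-x,a)$. $Q_n$ is a loop with neutral element $1=(1,0,\dots,0)$ (nonassociative exactly when $n\ge3$). For a loop $Q$, $Inn(Q)=\{f\in Mlt(Q)\mid f(1)=1\}$ where $Mlt(Q)=\langle L_x,R_x\mid x\in Q\rangle$, $L_x(a)=xa$, $R_x(a)=ax$; $Aut(Q)$ is the group of loop automorphisms. A loop is automorphic if $Inn(Q)\le Aut(Q)$. *)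

theory Defs
  imports Main
begin

text \<open>An element of Q_0 is CR a with a in {1,-1}
  (a real number, represented as an integer); an element (x,a) of Q_n with n >= 1
  is CP x a, where the bit a is encoded as a boolean (False = 0, True = 1).\<close>
datatype cd = CR int | CP cd bool

fun cd_neg :: "cd \<Rightarrow> cd" where
  "cd_neg (CR a) = CR (- a)"
| "cd_neg (CP x b) = CP (cd_neg x) b"

fun cd_conj :: "cd \<Rightarrow> cd" where
  "cd_conj (CR a) = CR a"
| "cd_conj (CP x False) = CP (cd_conj x) False"
| "cd_conj (CP x True) = CP (cd_neg x) True"

lemma size_cd_neg [simp]: "size (cd_neg x) = size x"
  by (induction x) auto

lemma size_cd_conj [simp]: "size (cd_conj x) = size x"
  by (induction x rule: cd_conj.induct) auto

function cd_mult :: "cd \<Rightarrow> cd \<Rightarrow> cd" where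
  "cd_mult (CR a) (CR b) = CR (a * b)"
| "cd_mult (CP x False) (CP y False) = CP (cd_mult x y) False"
| "cd_mult (CP x False) (CP y True) = CP (cd_mult y x) True"
| "cd_mult (CP x True) (CP y False) = CP (cd_mult x (cd_conj y)) True"
| "cd_mult (CP x True) (CP y True) = CP (cd_neg (cd_mult (cd_conj y) x)) False"
| "cd_mult (CR a) (CP y b) = undefined"
| "cd_mult (CP x b) (CR a) = undefined"
  by pat_completeness auto
termination
  by (relation "measure (\<lambda>(x, y). size x + size y)") auto

fun CD :: "nat \<Rightarrow> cd set" where
  "CD 0 = {CR 1, CR (-1)}"
| "CD (Suc n) = {CP x b | x b. x \<in> CD n}"

fun cd_one :: "nat \<Rightarrow> cd" where
  "cd_one 0 = CR 1"
| "cd_one (Suc n) = CP (cd_one n) False"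

text \<open>Multiplication group Mlt(Q) = <L_x, R_x | x in Q>, as maps on the carrier Q
  (only values on Q matter): generated from the identity by composing with the
  translations L_x, R_x and their inverses (on Q).\<close>
inductive_set Mlt :: "'a set \<Rightarrow> ('a \<Rightarrow> 'a \<Rightarrow> 'a) \<Rightarrow> ('a \<Rightarrow> 'a) set"
  for Q :: "'a set" and mul :: "'a \<Rightarrow> 'a \<Rightarrow> 'a" where
  Mlt_id: "(\<lambda>a. a) \<in> Mlt Q mul"
| Mlt_L: "f \<in> Mlt Q mul \<Longrightarrow> x \<in> Q \<Longrightarrow> (\<lambda>a. mul x (f a)) \<in> Mlt Q mul"
| Mlt_R: "f \<in> Mlt Q mul \<Longrightarrow> x \<in> Q \<Longrightarrow> (\<lambda>a. mul (f a) x) \<in> Mlt Q mul"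
| Mlt_Linv: "f \<in> Mlt Q mul \<Longrightarrow> x \<in> Q \<Longrightarrow> (\<lambda>a. inv_into Q (\<lambda>b. mul x b) (f a)) \<in> Mlt Q mul"
| Mlt_Rinv: "f \<in> Mlt Q mul \<Longrightarrow> x \<in> Q \<Longrightarrow> (\<lambda>a. inv_into Q (\<lambda>b. mul b x) (f a)) \<in> Mlt Q mul"

definition Inn :: "'a set \<Rightarrow> ('a \<Rightarrow> 'a \<Rightarrow> 'a) \<Rightarrow> 'a \<Rightarrow> ('a \<Rightarrow> 'a) set" where
  "Inn Q mul e = {f \<in> Mlt Q mul. f e = e}"

definition is_loop_aut :: "'a set \<Rightarrow> ('a \<Rightarrow> 'a \<Rightarrow> 'a) \<Rightarrow> ('a \<Rightarrow> 'a) \<Rightarrow> bool" where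
  "is_loop_aut Q mul f \<longleftrightarrow> bij_betw f Q Q \<and> (\<forall>a\<in>Q. \<forall>b\<in>Q. f (mul a b) = mul (f a) (f b))"

definition automorphic :: "'a set \<Rightarrow> ('a \<Rightarrow> 'a \<Rightarrow> 'a) \<Rightarrow> 'a \<Rightarrow> bool" where
  "automorphic Q mul e \<longleftrightarrow> (\<forall>f\<in>Inn Q mul e. is_loop_aut Q mul f)"

end

theory Submission
  imports Defs
begin

(* For a loop Q and x, y in Q, the map a \<mapsto> (x a) y is the
   composite R_y L_x, hence lies in Mlt(Q); if it fixes 1 it lies in Inn(Q).
   So if Q is automorphic, every such map fixing 1 is multiplicative.
   In the octonion loop Q_3 take the unit l = e_4 (the new Cayley--Dickson
   unit of the third doubling) and the map T(a) = (l a)(-l), which fixes 1;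
   for the units i, j of the quaternion subloop one computes
   T(i j) \<noteq> T(i) T(j), witnessing that Q_3 is not automorphic.
   Finally, Q_m embeds into Q_{m+k} by x \<mapsto> (\<dots>((x,0),0)\<dots>,0); this embedding
   is an injective homomorphism preserving 1, so the octonion witness is
   transported into every Q_n with n \<ge> 3.
   The file first develops the embedding, then the general criterion for
   non-automorphic loops, then the octonion computation, and combines them. *)

fun cd_embed :: "nat \<Rightarrow> cd \<Rightarrow> cd" where
  "cd_embed 0 x = x"
| "cd_embed (Suc k) x = CP (cd_embed k x) False"

lemma cd_embed_mem: "x \<in> CD m \<Longrightarrow> cd_embed k x \<in> CD (m + k)"
  by (induction k) auto

lemma cd_embed_mult: "cd_mult (cd_embed k x) (cd_embed k y) = cd_embed k (cd_mult x y)"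
  by (induction k) auto

lemma cd_embed_inj: "cd_embed k x = cd_embed k y \<Longrightarrow> x = y"
  by (induction k) auto

lemma cd_one_embed: "cd_one (m + k) = cd_embed k (cd_one m)"
  by (induction k) auto

definition sandwich :: "('a \<Rightarrow> 'a \<Rightarrow> 'a) \<Rightarrow> 'a \<Rightarrow> 'a \<Rightarrow> 'a \<Rightarrow> 'a" where
  "sandwich mul x y a = mul (mul x a) y"

lemma sandwich_in_Mlt:
  assumes "x \<in> Q" and "y \<in> Q"
  shows "sandwich mul x y \<in> Mlt Q mul"
proof -
  have "(\<lambda>a. mul x a) \<in> Mlt Q mul"
    using Mlt.Mlt_L[OF Mlt.Mlt_id \<open>x \<in> Q\<close>] .
  from Mlt.Mlt_R[OF this \<open>y \<in> Q\<close>] show ?thesis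
    by (simp add: sandwich_def[abs_def])
qed

lemma not_automorphic_by_sandwich:
  assumes "x \<in> Q" "y \<in> Q" "a \<in> Q" "b \<in> Q"
    and fixes_e: "sandwich mul x y e = e"
    and not_hom: "sandwich mul x y (mul a b) \<noteq> mul (sandwich mul x y a) (sandwich mul x y b)"
  shows "\<not> automorphic Q mul e"
proof
  assume "automorphic Q mul e"
  moreover have "sandwich mul x y \<in> Inn Q mul e"
    using sandwich_in_Mlt[OF \<open>x \<in> Q\<close> \<open>y \<in> Q\<close>] fixes_e by (simp add: Inn_def)
  ultimately have "is_loop_aut Q mul (sandwich mul x y)"
    by (simp add: automorphic_def)
  with \<open>a \<in> Q\<close> \<open>b \<in> Q\<close> not_hom show False
    by (simp add: is_loop_aut_def)
qed

lemma sandwich_embed: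
  "sandwich cd_mult (cd_embed k x) (cd_embed k y) (cd_embed k a)
     = cd_embed k (sandwich cd_mult x y a)"
  by (simp add: sandwich_def cd_embed_mult)

text \<open>Three octonion units: i and j generate the quaternion subloop Q_2,
  and l is the unit adjoined by the third doubling.\<close>
definition oct_i :: cd where "oct_i = CP (CP (CP (CR 1) True) False) False"
definition oct_j :: cd where "oct_j = CP (CP (CP (CR 1) False) True) False"
definition oct_l :: cd where "oct_l = CP (CP (CP (CR 1) False) False) True"

lemma octonion_units_mem:
  "oct_i \<in> CD 3" "oct_j \<in> CD 3" "oct_l \<in> CD 3" "cd_neg oct_l \<in> CD 3"
  by (auto simp: oct_i_def oct_j_def oct_l_def numeral_eq_Suc)

lemma octonion_sandwich_fixes_one:
  "sandwich cd_mult oct_l (cd_neg oct_l) (cd_one 3) = cd_one 3"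
  by (simp add: sandwich_def oct_l_def numeral_eq_Suc)

lemma octonion_sandwich_not_hom:
  "sandwich cd_mult oct_l (cd_neg oct_l) (cd_mult oct_i oct_j)
     \<noteq> cd_mult (sandwich cd_mult oct_l (cd_neg oct_l) oct_i)
               (sandwich cd_mult oct_l (cd_neg oct_l) oct_j)"
  by (simp add: sandwich_def oct_i_def oct_j_def oct_l_def)

theorem mainTheorem7:
  fixes n :: nat
  assumes "n \<ge> 3"
  shows "\<not> automorphic (CD n) cd_mult (cd_one n)"
proof -
  obtain k where n: "n = 3 + k"
    using assms le_Suc_ex by blast
  let ?T = "sandwich cd_mult (cd_embed k oct_l) (cd_embed k (cd_neg oct_l))"
  have embed_mem: "cd_embed k x \<in> CD n" if "x \<in> CD 3" for x
    using cd_embed_mem[OF that] n by simp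
  have fixes_one: "?T (cd_one n) = cd_one n"
    unfolding n cd_one_embed sandwich_embed octonion_sandwich_fixes_one ..
  have not_hom: "?T (cd_mult (cd_embed k oct_i) (cd_embed k oct_j))
      \<noteq> cd_mult (?T (cd_embed k oct_i)) (?T (cd_embed k oct_j))"
    using octonion_sandwich_not_hom cd_embed_inj
    unfolding cd_embed_mult sandwich_embed by metis
  show ?thesis
    using not_automorphic_by_sandwich[OF embed_mem embed_mem embed_mem embed_mem fixes_one not_hom]
    by (simp add: octonion_units_mem)
qed

end
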